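(* Let $X$ be a topological space and $x\in X$ a point such that $\overline{U}=X$ for every open neighborhood $U$ of $x$. If $M$ is a maximal finitely non-Hausdorff subset of $X$, then $x\in M$.
   Context: A non-empty subset $A$ of $X$ is finitely non-Hausdorff if for every non-empty finite $F\subseteq A$ and every family $\{U_y:y\in F\}$ of open neighborhoods $U_y$ of $y$, $\bigcap_{y\in F}U_y\neq\emptyset$; it is maximal finitely non-Hausdorff if no finitely non-Hausdorff subset of $X$ properly contains it. *)

theory Defs
  imports "HOL-Analysis.Analysis"
begin

definition finitely_non_hausdorff :: "'a topology \<Rightarrow> 'a set \<Rightarrow> bool" where
  "finitely_non_hausdorff X A \<longleftrightarrow>
     A \<noteq> {} \<and> A \<subseteq> topspace X \<and>
     (\<forall>F U. finite F \<and> F \<noteq> {} \<and> F \<subseteq> A \<and>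
            (\<forall>y\<in>F. openin X (U y) \<and> y \<in> U y) \<longrightarrow> (\<Inter>y\<in>F. U y) \<noteq> {})"

definition maximal_finitely_non_hausdorff :: "'a topology \<Rightarrow> 'a set \<Rightarrow> bool" where
  "maximal_finitely_non_hausdorff X M \<longleftrightarrow>
     finitely_non_hausdorff X M \<and>
     (\<forall>B. finitely_non_hausdorff X B \<and> M \<subseteq> B \<longrightarrow> B = M)"

end

theory Submission
  imports Defs
begin

text \<open>A point all of whose neighbourhoods are dense can be added to any finitely
non-Hausdorff set: for a finite family of neighbourhoods, the intersection of those around
the points of the set is a non-empty open set, and it meets the dense neighbourhood of the
point. By maximality the point is then already in the set.\<close>

lemma openin_Int_dense_nonempty:
  assumes "openin X S" "S \<noteq> {}" "X closure_of T = topspace X"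
  shows "S \<inter> T \<noteq> {}"
  using assms openin_subset openin_Int_closure_of_eq_empty by fastforce

lemma finitely_non_hausdorff_insert_dense_point:
  assumes A: "finitely_non_hausdorff X A"
    and x: "x \<in> topspace X"
    and dense: "\<And>U. openin X U \<Longrightarrow> x \<in> U \<Longrightarrow> X closure_of U = topspace X"
  shows "finitely_non_hausdorff X (insert x A)"
  unfolding finitely_non_hausdorff_def
proof (intro conjI allI impI)
  show "insert x A \<noteq> {}" by simp
  show "insert x A \<subseteq> topspace X"
    using A x unfolding finitely_non_hausdorff_def by auto
next
  fix F U
  assume "finite F \<and> F \<noteq> {} \<and> F \<subseteq> insert x A \<and> (\<forall>y\<in>F. openin X (U y) \<and> y \<in> U y)"
  then have F: "finite F" "F \<noteq> {}" "F \<subseteq> insert x A"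
    and U: "\<And>y. y \<in> F \<Longrightarrow> openin X (U y) \<and> y \<in> U y" by auto
  have A_case: "(\<Inter>y\<in>G. U y) \<noteq> {}" if "G \<subseteq> F" "G \<noteq> {}" "G \<subseteq> A" for G
  proof -
    have "finite G" using that(1) F(1) finite_subset by blast
    moreover have "\<forall>y\<in>G. openin X (U y) \<and> y \<in> U y"
      using that(1) U by blast
    ultimately show ?thesis
      using A that(2,3) unfolding finitely_non_hausdorff_def by blast
  qed
  show "(\<Inter>y\<in>F. U y) \<noteq> {}"
  proof (cases "x \<in> F \<and> F - {x} \<noteq> {}")
    case True
    let ?G = "F - {x}"
    have "openin X (\<Inter>y\<in>?G. U y)"
      using True F(1) U by (intro openin_INT2) auto
    moreover have "(\<Inter>y\<in>?G. U y) \<noteq> {}"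
      using True F(3) by (intro A_case) auto
    moreover have "X closure_of U x = topspace X"
      using True U dense by blast
    ultimately have "(\<Inter>y\<in>?G. U y) \<inter> U x \<noteq> {}"
      by (rule openin_Int_dense_nonempty)
    moreover have "(\<Inter>y\<in>F. U y) = (\<Inter>y\<in>?G. U y) \<inter> U x"
      using True by auto
    ultimately show ?thesis by simp
  next
    case False
    then consider "F = {x}" | "F \<subseteq> A"
      using F by blast
    then show ?thesis
      by cases (use U A_case F in auto)
  qed
qed

theorem lemma2p20:
  fixes X :: "'a topology" and x :: 'a and M :: "'a set"
  assumes "x \<in> topspace X"
    and "\<And>U. openin X U \<Longrightarrow> x \<in> U \<Longrightarrow> X closure_of U = topspace X"
    and "maximal_finitely_non_hausdorff X M"
  shows "x \<in> M"
proof -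
  have M: "finitely_non_hausdorff X M"
    and maximal: "\<And>B. finitely_non_hausdorff X B \<Longrightarrow> M \<subseteq> B \<Longrightarrow> B = M"
    using assms(3) unfolding maximal_finitely_non_hausdorff_def by auto
  have "finitely_non_hausdorff X (insert x M)"
    using finitely_non_hausdorff_insert_dense_point[OF M assms(1,2)] .
  then have "insert x M = M"
    by (rule maximal) blast
  then show ?thesis by blast
qed

end
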